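(* Let $\mathbf L$ be a locally compact non-discrete non-Archimedean field. Each uniform polyhedron $P$ over $\mathbf L$ is an ANRU.
   Context: A simplex over $\mathbf L$ is a closed ball $x+\pi^kB(c_0(\mathbf L,A'),0,1)$ ($\pi\in\mathbf L$ of maximal absolute value $<1$, $k\in\mathbb Z$) in a coordinate subspace $c_0(\mathbf L,A')$ of the Banach space $c_0(\mathbf L,A)$ (families in $\mathbf L$ tending to zero, sup norm). A polyhedron is a subset of $c_0(\mathbf L,A)$ which is a disjoint union of simplexes $s_i$, $i\in F$; it is uniform if $\sup_i\mathrm{diam}(s_i)<\infty$ and $\inf_{i\ne j}\mathrm{dist}(s_i,s_j)>0$. An ANRU is an ultrauniform space $X$ (uniformity generated by pseudoultrametrics) such that whenever $X$ is (uniformly) embedded into an ultrauniform space $Y$, there exist a uniform neighbourhood $V$ with $X\subset V\subset Y$ and a uniformly continuous retraction $r:V\to X$. *)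

theory Defs
  imports "HOL-Analysis.Analysis"
begin

definition nonarch_abs :: "('k::field \<Rightarrow> real) \<Rightarrow> bool" where
  "nonarch_abs v \<longleftrightarrow> (\<forall>x. 0 \<le> v x) \<and> (\<forall>x. v x = 0 \<longleftrightarrow> x = 0)
     \<and> (\<forall>x y. v (x * y) = v x * v y) \<and> (\<forall>x y. v (x + y) \<le> max (v x) (v y))"

definition abs_dist :: "('k::field \<Rightarrow> real) \<Rightarrow> 'k \<Rightarrow> 'k \<Rightarrow> real" where
  "abs_dist v x y = v (x - y)"

text \<open>Non-discrete: 0 (hence every point) is not isolated.\<close>
definition nondiscrete_abs :: "('k::field \<Rightarrow> real) \<Rightarrow> bool" where
  "nondiscrete_abs v \<longleftrightarrow> (\<forall>e>0. \<exists>x. x \<noteq> 0 \<and> v x < e)"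

definition locally_compact_abs :: "('k::field \<Rightarrow> real) \<Rightarrow> bool" where
  "locally_compact_abs v \<longleftrightarrow>
     locally_compact_space (Metric_space.mtopology (UNIV::'k set) (abs_dist v))"

definition c0 :: "('k::field \<Rightarrow> real) \<Rightarrow> 'a set \<Rightarrow> ('a \<Rightarrow> 'k) set" where
  "c0 v A = {x. (\<forall>a. a \<notin> A \<longrightarrow> x a = 0) \<and> (\<forall>e>0. finite {a. e \<le> v (x a)})}"

definition c0norm :: "('k::field \<Rightarrow> real) \<Rightarrow> ('a \<Rightarrow> 'k) \<Rightarrow> real" where
  "c0norm v x = (SUP a. v (x a))"

definition c0dist :: "('k::field \<Rightarrow> real) \<Rightarrow> ('a \<Rightarrow> 'k) \<Rightarrow> ('a \<Rightarrow> 'k) \<Rightarrow> real" where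
  "c0dist v x y = c0norm v (\<lambda>a. x a - y a)"

definition c0_simplex :: "('k::field \<Rightarrow> real) \<Rightarrow> 'k \<Rightarrow> 'a set \<Rightarrow> ('a \<Rightarrow> 'k) set \<Rightarrow> bool" where
  "c0_simplex v p A s \<longleftrightarrow> (\<exists>x A' k. A' \<subseteq> A \<and> x \<in> c0 v A \<and>
      s = {(\<lambda>a. x a + p powi (k::int) * y a) | y. y \<in> c0 v A' \<and> c0norm v y \<le> 1})"

definition uniform_polyhedron ::
  "('k::field \<Rightarrow> real) \<Rightarrow> 'k \<Rightarrow> 'a set \<Rightarrow> ('a \<Rightarrow> 'k) set \<Rightarrow> bool" where
  "uniform_polyhedron v p A P \<longleftrightarrow> P \<subseteq> c0 v A \<and>
     (\<exists>S. (\<forall>s\<in>S. c0_simplex v p A s) \<and> pairwise disjnt S \<and> \<Union>S = P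
        \<and> (\<exists>C. \<forall>s\<in>S. \<forall>x\<in>s. \<forall>y\<in>s. c0dist v x y \<le> C)
        \<and> (\<exists>\<delta>>0. \<forall>s\<in>S. \<forall>t\<in>S. s \<noteq> t \<longrightarrow> (\<forall>x\<in>s. \<forall>y\<in>t. \<delta> \<le> c0dist v x y)))"

definition pseudoultrametric :: "'a set \<Rightarrow> ('a \<Rightarrow> 'a \<Rightarrow> real) \<Rightarrow> bool" where
  "pseudoultrametric X d \<longleftrightarrow> (\<forall>x\<in>X. d x x = 0) \<and> (\<forall>x\<in>X. \<forall>y\<in>X. 0 \<le> d x y \<and> d x y = d y x)
     \<and> (\<forall>x\<in>X. \<forall>y\<in>X. \<forall>z\<in>X. d x z \<le> max (d x y) (d y z))"

definition generated_uniformity :: "'a set \<Rightarrow> ('a \<Rightarrow> 'a \<Rightarrow> real) set \<Rightarrow> ('a \<times> 'a) set set" where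
  "generated_uniformity X D = {E. E \<subseteq> X \<times> X \<and> (\<exists>F e. finite F \<and> F \<subseteq> D \<and> 0 < e \<and>
       {(x, y). x \<in> X \<and> y \<in> X \<and> (\<forall>d\<in>F. d x y < e)} \<subseteq> E)}"

definition ultrauniform_space :: "'a set \<Rightarrow> ('a \<times> 'a) set set \<Rightarrow> bool" where
  "ultrauniform_space X U \<longleftrightarrow>
     (\<exists>D. (\<forall>d\<in>D. pseudoultrametric X d) \<and> U = generated_uniformity X D)"

definition subspace_uniformity :: "('a \<times> 'a) set set \<Rightarrow> 'a set \<Rightarrow> ('a \<times> 'a) set set" where
  "subspace_uniformity U S = {E \<inter> (S \<times> S) | E. E \<in> U}"

definition unif_cont_map ::
  "'a set \<Rightarrow> ('a \<times> 'a) set set \<Rightarrow> 'b set \<Rightarrow> ('b \<times> 'b) set set \<Rightarrow> ('a \<Rightarrow> 'b) \<Rightarrow> bool" where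
  "unif_cont_map X U Y W f \<longleftrightarrow> f ` X \<subseteq> Y \<and>
     (\<forall>E\<in>W. \<exists>D\<in>U. \<forall>x y. (x, y) \<in> D \<longrightarrow> (f x, f y) \<in> E)"

definition uniform_embedding ::
  "'a set \<Rightarrow> ('a \<times> 'a) set set \<Rightarrow> 'b set \<Rightarrow> ('b \<times> 'b) set set \<Rightarrow> ('a \<Rightarrow> 'b) \<Rightarrow> bool" where
  "uniform_embedding X U Y W e \<longleftrightarrow> inj_on e X \<and> unif_cont_map X U Y W e \<and>
     (\<exists>g. unif_cont_map (e ` X) (subspace_uniformity W (e ` X)) X U g \<and> (\<forall>x\<in>X. g (e x) = x))"

definition uniform_nbhd :: "'b set \<Rightarrow> ('b \<times> 'b) set set \<Rightarrow> 'b set \<Rightarrow> 'b set \<Rightarrow> bool" where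
  "uniform_nbhd Y W S V \<longleftrightarrow> S \<subseteq> V \<and> V \<subseteq> Y \<and> (\<exists>E\<in>W. {y. \<exists>x\<in>S. (x, y) \<in> E} \<subseteq> V)"

text \<open>ANRU, with ambient spaces Y ranging over the type 'b (the theorem is generic in 'b).\<close>
definition ANRU :: "'a set \<Rightarrow> ('a \<times> 'a) set set \<Rightarrow> 'b itself \<Rightarrow> bool" where
  "ANRU X U (T::'b itself) \<longleftrightarrow> ultrauniform_space X U \<and>
     (\<forall>(Y::'b set) W e. ultrauniform_space Y W \<and> uniform_embedding X U Y W e \<longrightarrow>
        (\<exists>V r. uniform_nbhd Y W (e ` X) V \<and>
               unif_cont_map V (subspace_uniformity W V) (e ` X) (subspace_uniformity W (e ` X)) r \<and>
               (\<forall>y\<in>e ` X. r y = y)))"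

definition c0_uniformity :: "('k::field \<Rightarrow> real) \<Rightarrow> ('a \<Rightarrow> 'k) set \<Rightarrow> (('a \<Rightarrow> 'k) \<times> ('a \<Rightarrow> 'k)) set set" where
  "c0_uniformity v P = generated_uniformity P {c0dist v}"

end

theory Submission
  imports Defs
begin

text \<open>A uniform polyhedron is a complete ultrametric space, and every complete ultrametric space
  is an ANRU.

  Completeness: a Cauchy sequence in \<open>L\<close>, translated to \<open>0\<close>, eventually lies in a compact
  neighbourhood of \<open>0\<close>, so \<open>L\<close> is complete, and \<open>c\<^sub>0(L, A)\<close> is complete by taking coordinatewise
  limits. A simplex is a product of closed balls of \<open>L\<close>, hence closed in \<open>c\<^sub>0(L, A)\<close>, and a union
  of uniformly separated closed sets is closed.

  Retraction: let \<open>e\<close> embed a complete metric space \<open>X\<close> uniformly into an ultrauniform space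
  \<open>Y\<close>. Since \<open>Y\<close> has a base of entourages that are equivalence relations, there is a decreasing
  chain of such entourages \<open>E\<^sub>n\<close> whose traces on \<open>e X\<close> have diameter \<open>< 1/(n+1)\<close>. A point \<open>y\<close>
  whose \<open>E\<^sub>0\<close>-class meets \<open>e X\<close> is sent to a point of \<open>e X\<close> chosen in its \<open>E\<^sub>k\<close>-class, for
  the last level \<open>k\<close> at which this class meets \<open>e X\<close>; if the classes meet \<open>e X\<close> at every level,
  the chosen points form a Cauchy sequence and \<open>y\<close> is sent to the image of its limit. Points in
  the same \<open>E\<^sub>n\<close>-class see the same classes up to level \<open>n\<close>, which makes this map uniformly
  continuous.\<close>

lemma (in Metric_space) closedin_Union_separated:
  assumes closed: "\<And>s. s \<in> S \<Longrightarrow> closedin mtopology s" and "\<delta> > 0"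
    and sep: "\<And>s t x y. s \<in> S \<Longrightarrow> t \<in> S \<Longrightarrow> s \<noteq> t \<Longrightarrow> x \<in> s \<Longrightarrow> y \<in> t \<Longrightarrow> \<delta> \<le> d x y"
  shows "closedin mtopology (\<Union>S)"
  unfolding metric_closedin_iff_sequentially_closed
proof (intro conjI allI impI)
  have "s \<subseteq> M" if "s \<in> S" for s
    using closedin_subset[OF closed[OF that]] by simp
  then show "\<Union>S \<subseteq> M"
    by blast
  fix \<sigma> l assume "range \<sigma> \<subseteq> \<Union>S \<and> limitin mtopology \<sigma> l sequentially"
  then have \<sigma>: "range \<sigma> \<subseteq> \<Union>S" and lim: "limitin mtopology \<sigma> l sequentially"
    by auto
  have "eventually (\<lambda>n. \<sigma> n \<in> M \<and> d (\<sigma> n) l < \<delta> / 2) sequentially"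
    using lim half_gt_zero[OF \<open>\<delta> > 0\<close>] unfolding limitin_metric by blast
  then obtain N where N: "\<And>n. N \<le> n \<Longrightarrow> \<sigma> n \<in> M \<and> d (\<sigma> n) l < \<delta> / 2"
    unfolding eventually_sequentially by blast
  obtain s where s: "s \<in> S" "\<sigma> N \<in> s"
    using \<sigma> by blast
  \<comment> \<open>the tail of the sequence has diameter \<open>< \<delta>\<close>, so it cannot leave \<open>s\<close>\<close>
  have "\<sigma> n \<in> s" if "N \<le> n" for n
  proof (rule ccontr)
    assume "\<sigma> n \<notin> s"
    then obtain t where "t \<in> S" "\<sigma> n \<in> t" "t \<noteq> s"
      using \<sigma> by blast
    then have "\<delta> \<le> d (\<sigma> N) (\<sigma> n)"
      using sep s by blast
    moreover have "d (\<sigma> N) (\<sigma> n) \<le> d (\<sigma> N) l + d (\<sigma> n) l"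
      using triangle[of "\<sigma> N" l "\<sigma> n"] N[of N] N[OF that] limitin_mspace[OF lim] commute by simp
    ultimately show False
      using N[of N] N[OF that] by linarith
  qed
  then have "eventually (\<lambda>n. \<sigma> n \<in> s) sequentially"
    unfolding eventually_sequentially by blast
  then have "l \<in> s"
    using limitin_closedin[OF lim closed[OF s(1)]] by simp
  then show "l \<in> \<Union>S"
    using s(1) by blast
qed

locale nonarch_field =
  fixes v :: "'k::field \<Rightarrow> real"
  assumes nonarch: "nonarch_abs v"
begin

lemma abs_nonneg [simp]: "0 \<le> v x"
  using nonarch unfolding nonarch_abs_def by blast

lemma abs_eq_0_iff [simp]: "v x = 0 \<longleftrightarrow> x = 0"
  using nonarch unfolding nonarch_abs_def by blast

lemma abs_le_0_iff [simp]: "v x \<le> 0 \<longleftrightarrow> x = 0"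
  using nonarch unfolding nonarch_abs_def by (metis order_antisym order_refl)

lemma abs_zero [simp]: "v 0 = 0"
  by simp

lemma abs_mult: "v (x * y) = v x * v y"
  using nonarch unfolding nonarch_abs_def by blast

lemma abs_add_le_max: "v (x + y) \<le> max (v x) (v y)"
  using nonarch unfolding nonarch_abs_def by blast

lemma abs_pos_iff [simp]: "0 < v x \<longleftrightarrow> x \<noteq> 0"
  using abs_nonneg[of x] abs_eq_0_iff[of x] by linarith

lemma abs_one [simp]: "v 1 = 1"
proof -
  have "v 1 * v 1 = v 1 * 1"
    using abs_mult[of 1 1] by simp
  moreover have "v 1 \<noteq> 0"
    by simp
  ultimately show ?thesis
    by (metis mult_left_cancel)
qed

lemma abs_inverse: "v (inverse x) = inverse (v x)"
proof (cases "x = 0")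
  case False
  then have "v (inverse x) * v x = 1"
    using abs_mult[of "inverse x" x] by simp
  then show ?thesis
    by (metis inverse_unique mult.commute)
qed simp

lemma abs_minus [simp]: "v (- x) = v x"
proof -
  have "(v (- 1))\<^sup>2 = 1\<^sup>2"
    using abs_mult[of "- 1" "- 1"] by (simp add: power2_eq_square)
  then have "v (- 1) = 1"
    using power2_eq_iff_nonneg[of "v (- 1)" 1] by simp
  then show ?thesis
    using abs_mult[of "- 1" x] by simp
qed

lemma abs_diff_commute: "v (x - y) = v (y - x)"
  by (metis abs_minus minus_diff_eq)

lemma abs_diff_le_max: "v (x - z) \<le> max (v (x - y)) (v (y - z))"
  using abs_add_le_max[of "x - y" "y - z"] by simp

lemma abs_add_less: "v x < e \<Longrightarrow> v y < e \<Longrightarrow> v (x + y) < e"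
  using abs_add_le_max[of x y] by simp

sublocale field: Metric_space UNIV "abs_dist v"
proof
  fix x y z :: 'k
  show "0 \<le> abs_dist v x y" "abs_dist v x y = abs_dist v y x"
    by (simp_all add: abs_dist_def abs_diff_commute)
  show "abs_dist v x y = 0 \<longleftrightarrow> x = y"
    by (simp add: abs_dist_def)
  have "v (x - z) \<le> max (v (x - y)) (v (y - z))"
    by (rule abs_diff_le_max)
  then show "abs_dist v x z \<le> abs_dist v x y + abs_dist v y z"
    using abs_nonneg[of "x - y"] abs_nonneg[of "y - z"] unfolding abs_dist_def by linarith
qed

lemma mcomplete_abs_dist:
  assumes "locally_compact_abs v"
  shows "field.mcomplete"
  unfolding field.mcomplete_def
proof (intro allI impI)
  fix \<sigma> assume cauchy: "field.MCauchy \<sigma>"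
  have "locally_compact_space field.mtopology"
    using assms by (simp add: locally_compact_abs_def)
  then obtain U K where UK: "openin field.mtopology U" "compactin field.mtopology K" "0 \<in> U" "U \<subseteq> K"
    unfolding locally_compact_space_def field.topspace_mtopology by blast
  obtain \<epsilon> where "\<epsilon> > 0" and "field.mball 0 \<epsilon> \<subseteq> U"
    using UK(1,3) unfolding field.openin_mtopology by blast
  with UK(4) have ball_K: "field.mball 0 \<epsilon> \<subseteq> K"
    by blast
  obtain N where N: "\<And>n n'. N \<le> n \<Longrightarrow> N \<le> n' \<Longrightarrow> abs_dist v (\<sigma> n) (\<sigma> n') < \<epsilon>"
    using cauchy \<open>\<epsilon> > 0\<close> unfolding field.MCauchy_def by blast
  define \<tau> where "\<tau> n = \<sigma> (n + N) - \<sigma> N" for n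
  have "abs_dist v 0 (\<tau> n) = abs_dist v (\<sigma> N) (\<sigma> (n + N))" for n
    by (simp add: \<tau>_def abs_dist_def)
  then have "range \<tau> \<subseteq> K"
    using N[of N] ball_K by force
  then obtain l r where r: "strict_mono r" and lim_r: "limitin field.mtopology (\<tau> \<circ> r) l sequentially"
    using UK(2) unfolding field.compactin_sequentially by blast
  \<comment> \<open>translating back by \<open>\<sigma> N\<close> is an isometry\<close>
  have "abs_dist v ((\<sigma> \<circ> (\<lambda>n. r n + N)) n) (l + \<sigma> N) = abs_dist v ((\<tau> \<circ> r) n) l" for n
    unfolding \<tau>_def abs_dist_def by (simp add: algebra_simps)
  then have "limitin field.mtopology (\<sigma> \<circ> (\<lambda>n. r n + N)) (l + \<sigma> N) sequentially"
    using lim_r unfolding field.limitin_metric by simp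
  moreover have "strict_mono (\<lambda>n. r n + N)"
    using r by (simp add: strict_mono_def)
  ultimately show "\<exists>x. limitin field.mtopology \<sigma> x sequentially"
    using field.MCauchy_convergent_subsequence[OF cauchy] by blast
qed

lemma uniformizer_nonzero:
  assumes "nondiscrete_abs v" "\<forall>y. v y < 1 \<longrightarrow> v y \<le> v p"
  shows "p \<noteq> 0"
proof
  assume "p = 0"
  obtain y where "y \<noteq> 0" "v y < 1"
    using assms(1) unfolding nondiscrete_abs_def by (meson zero_less_one)
  with assms(2) \<open>p = 0\<close> show False
    by simp
qed

end

lemma c0norm_le:
  assumes "\<And>a. v (x a) \<le> B"
  shows "c0norm v x \<le> B"
  unfolding c0norm_def by (rule cSUP_least) (auto simp: assms)

context nonarch_field
begin

lemma c0_bdd_above: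
  assumes "x \<in> c0 v A"
  shows "bdd_above (range (\<lambda>a. v (x a)))"
proof -
  let ?F = "{a. 1 \<le> v (x a)}"
  have "finite ?F"
    using assms unfolding c0_def by auto
  then have "v (x a) \<le> 1 + (\<Sum>b\<in>?F. v (x b))" for a
    using member_le_sum[of a ?F "\<lambda>b. v (x b)"] sum_nonneg[of ?F "\<lambda>b. v (x b)"]
    by (cases "a \<in> ?F") auto
  then show ?thesis
    by (intro bdd_aboveI2) blast
qed

lemma abs_le_c0norm:
  assumes "x \<in> c0 v A"
  shows "v (x a) \<le> c0norm v x"
  unfolding c0norm_def by (rule cSUP_upper[OF _ c0_bdd_above[OF assms]]) simp

lemma c0_mono: "A' \<subseteq> A \<Longrightarrow> c0 v A' \<subseteq> c0 v A"
  unfolding c0_def by blast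

lemma c0_add:
  assumes x: "x \<in> c0 v A" and y: "y \<in> c0 v A"
  shows "(\<lambda>a. x a + y a) \<in> c0 v A"
  unfolding c0_def
proof (intro CollectI conjI allI impI)
  fix a assume "a \<notin> A"
  then show "x a + y a = 0"
    using x y unfolding c0_def by auto
next
  fix e :: real assume "e > 0"
  have "{a. e \<le> v (x a + y a)} \<subseteq> {a. e \<le> v (x a)} \<union> {a. e \<le> v (y a)}"
  proof
    fix a assume "a \<in> {a. e \<le> v (x a + y a)}"
    then show "a \<in> {a. e \<le> v (x a)} \<union> {a. e \<le> v (y a)}"
      using abs_add_le_max[of "x a" "y a"] by auto
  qed
  moreover have "finite ({a. e \<le> v (x a)} \<union> {a. e \<le> v (y a)})"
    using x y \<open>e > 0\<close> unfolding c0_def by auto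
  ultimately show "finite {a. e \<le> v (x a + y a)}"
    by (rule finite_subset)
qed

lemma c0_scale:
  assumes x: "x \<in> c0 v A"
  shows "(\<lambda>a. q * x a) \<in> c0 v A"
proof (cases "q = 0")
  case True
  then show ?thesis
    unfolding c0_def by simp
next
  case False
  then have "{a. e \<le> v (q * x a)} = {a. e / v q \<le> v (x a)}" for e
    by (simp add: abs_mult pos_divide_le_eq mult.commute)
  then show ?thesis
    using x False unfolding c0_def by (simp add: divide_pos_pos)
qed

lemma c0_diff:
  assumes "x \<in> c0 v A" "y \<in> c0 v A"
  shows "(\<lambda>a. x a - y a) \<in> c0 v A"
  using c0_add[OF assms(1) c0_scale[OF assms(2), of "- 1"]] by simp

lemma c0dist_le_iff:
  assumes "x \<in> c0 v A" "y \<in> c0 v A"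
  shows "c0dist v x y \<le> B \<longleftrightarrow> (\<forall>a. v (x a - y a) \<le> B)"
  using abs_le_c0norm[OF c0_diff[OF assms]] c0norm_le[of v "\<lambda>a. x a - y a" B]
  unfolding c0dist_def by (meson order.trans)

lemma c0dist_commute: "c0dist v x y = c0dist v y x"
  unfolding c0dist_def c0norm_def by (simp add: abs_diff_commute)

lemma c0dist_ultra:
  assumes "x \<in> c0 v A" "y \<in> c0 v A" "z \<in> c0 v A"
  shows "c0dist v x z \<le> max (c0dist v x y) (c0dist v y z)"
proof -
  have "v (x a - z a) \<le> max (c0dist v x y) (c0dist v y z)" for a
    using abs_diff_le_max[of "x a" "z a" "y a"]
      c0dist_le_iff[OF assms(1,2), THEN iffD1, OF order.refl, rule_format, of a]
      c0dist_le_iff[OF assms(2,3), THEN iffD1, OF order.refl, rule_format, of a]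
    by linarith
  then show ?thesis
    using c0dist_le_iff[OF assms(1,3)] by blast
qed

lemma c0_uniform_limit_mem:
  fixes \<sigma> :: "nat \<Rightarrow> 'a \<Rightarrow> 'k"
  assumes \<sigma>: "\<And>n. \<sigma> n \<in> c0 v A"
    and unif: "\<And>e. e > 0 \<Longrightarrow> \<exists>N. \<forall>n\<ge>N. \<forall>a. v (\<sigma> n a - z a) < e"
  shows "z \<in> c0 v A"
  unfolding c0_def
proof (intro CollectI conjI allI impI)
  fix a assume "a \<notin> A"
  then have \<sigma>0: "\<sigma> n a = 0" for n
    using \<sigma> unfolding c0_def by auto
  have small: "v (z a) < e" if e_pos: "e > 0" for e
  proof -
    obtain N where N: "\<forall>n\<ge>N. \<forall>a. v (\<sigma> n a - z a) < e"
      using unif[OF e_pos] by blast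
    have "v (\<sigma> N a - z a) < e"
      using N[rule_format, OF le_refl] .
    then show ?thesis
      using \<sigma>0[of N] by simp
  qed
  show "z a = 0"
  proof (rule ccontr)
    assume "z a \<noteq> 0"
    then show False
      using small[of "v (z a)"] by simp
  qed
next
  fix e :: real assume "e > 0"
  obtain N0 where N0: "\<forall>n\<ge>N0. \<forall>a. v (\<sigma> n a - z a) < e"
    using unif[OF \<open>e > 0\<close>] by blast
  have N: "v (\<sigma> N0 a - z a) < e" for a
    using N0[rule_format, OF le_refl] .
  have "{a. e \<le> v (z a)} \<subseteq> {a. e \<le> v (\<sigma> N0 a)}"
  proof (rule subsetI, rule ccontr)
    fix a assume "a \<in> {a. e \<le> v (z a)}" "a \<notin> {a. e \<le> v (\<sigma> N0 a)}"
    moreover have "v (\<sigma> N0 a + (z a - \<sigma> N0 a)) < e"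
      using \<open>a \<notin> _\<close> N[of a] by (intro abs_add_less) (auto simp: abs_diff_commute)
    ultimately show False
      by simp
  qed
  moreover have "finite {a. e \<le> v (\<sigma> N0 a)}"
    using \<sigma>[of N0] \<open>e > 0\<close> unfolding c0_def by blast
  ultimately show "finite {a. e \<le> v (z a)}"
    by (rule finite_subset)
qed

end

text \<open>Outside \<open>c0 v A\<close> the supremum defining \<open>c0dist\<close> is a junk value, whereas \<open>Metric_space\<close>
  requires a distance that is non-negative everywhere; hence the truncation.\<close>

locale c0_space = nonarch_field v for v :: "'k::field \<Rightarrow> real" +
  fixes A :: "'a set"
begin

definition c0_metric :: "('a \<Rightarrow> 'k) \<Rightarrow> ('a \<Rightarrow> 'k) \<Rightarrow> real" where
  "c0_metric x y = (if x \<in> c0 v A \<and> y \<in> c0 v A then c0dist v x y else 0)"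

lemma abs_le_c0_metric:
  assumes "x \<in> c0 v A" "y \<in> c0 v A"
  shows "v (x a - y a) \<le> c0_metric x y"
  using c0dist_le_iff[OF assms, of "c0dist v x y"] assms unfolding c0_metric_def by simp

lemma c0_metric_ultra:
  assumes "x \<in> c0 v A" "y \<in> c0 v A" "z \<in> c0 v A"
  shows "c0_metric x z \<le> max (c0_metric x y) (c0_metric y z)"
  using c0dist_ultra[OF assms] assms unfolding c0_metric_def by simp

lemma c0_metric_nonneg: "0 \<le> c0_metric x y"
proof (cases "x \<in> c0 v A \<and> y \<in> c0 v A")
  case True
  then show ?thesis
    using order.trans[OF abs_nonneg abs_le_c0_metric] by blast
qed (auto simp: c0_metric_def)

sublocale c0: Metric_space "c0 v A" c0_metric
proof
  fix x y z
  show "0 \<le> c0_metric x y"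
    by (rule c0_metric_nonneg)
  show "c0_metric x y = c0_metric y x"
    unfolding c0_metric_def by (simp add: c0dist_commute conj_commute)
  assume x: "x \<in> c0 v A" and y: "y \<in> c0 v A"
  show "c0_metric x y = 0 \<longleftrightarrow> x = y"
  proof
    assume "c0_metric x y = 0"
    then have le0: "v (x a - y a) \<le> 0" for a
      using abs_le_c0_metric[OF x y] by metis
    have "x a = y a" for a
      using le0[of a] abs_nonneg[of "x a - y a"] by (simp add: order_antisym_conv)
    then show "x = y" ..
  next
    assume "x = y"
    then have "c0dist v x y \<le> 0"
      using c0dist_le_iff[OF x y] by simp
    then show "c0_metric x y = 0"
      using c0_metric_nonneg[of x y] x y unfolding c0_metric_def by simp
  qed
  assume z: "z \<in> c0 v A"
  from c0_metric_ultra[OF x y z] show "c0_metric x z \<le> c0_metric x y + c0_metric y z"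
    using c0_metric_nonneg[of x y] c0_metric_nonneg[of y z] by (simp add: max.bounded_iff)
qed

lemma limitin_c0_coordinate:
  assumes lim: "limitin c0.mtopology \<sigma> l sequentially"
  shows "limitin field.mtopology (\<lambda>n. \<sigma> n a) (l a) sequentially"
  unfolding field.limitin_metric
proof (intro conjI allI impI)
  have l: "l \<in> c0 v A"
    using lim by (rule c0.limitin_mspace)
  fix e :: real assume "e > 0"
  with lim have "eventually (\<lambda>n. \<sigma> n \<in> c0 v A \<and> c0_metric (\<sigma> n) l < e) sequentially"
    unfolding c0.limitin_metric by blast
  then show "eventually (\<lambda>n. \<sigma> n a \<in> UNIV \<and> abs_dist v (\<sigma> n a) (l a) < e) sequentially"
  proof (rule eventually_mono)
    fix n assume "\<sigma> n \<in> c0 v A \<and> c0_metric (\<sigma> n) l < e"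
    then show "\<sigma> n a \<in> UNIV \<and> abs_dist v (\<sigma> n a) (l a) < e"
      using abs_le_c0_metric[OF _ l, of "\<sigma> n" a] unfolding abs_dist_def by fastforce
  qed
qed simp

lemma closedin_c0_coordinatewise:
  assumes closed: "\<And>a. closedin field.mtopology (S a)"
  shows "closedin c0.mtopology {z \<in> c0 v A. \<forall>a. z a \<in> S a}"
  unfolding c0.metric_closedin_iff_sequentially_closed
proof (intro conjI allI impI)
  fix \<sigma> l assume "range \<sigma> \<subseteq> {z \<in> c0 v A. \<forall>a. z a \<in> S a} \<and> limitin c0.mtopology \<sigma> l sequentially"
  then have \<sigma>: "\<And>n a. \<sigma> n a \<in> S a" and lim: "limitin c0.mtopology \<sigma> l sequentially"
    by auto
  have "l a \<in> S a" for a
    using limitin_closedin[OF limitin_c0_coordinate[OF lim] closed] \<sigma> by simp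
  moreover have "l \<in> c0 v A"
    using lim by (rule c0.limitin_mspace)
  ultimately show "l \<in> {z \<in> c0 v A. \<forall>a. z a \<in> S a}"
    by blast
qed blast

lemma MCauchy_c0_coordinate:
  assumes "c0.MCauchy \<sigma>"
  shows "field.MCauchy (\<lambda>n. \<sigma> n a)"
  unfolding field.MCauchy_def
proof (intro conjI allI impI)
  have \<sigma>: "\<And>n. \<sigma> n \<in> c0 v A"
    and cauchy: "\<And>\<epsilon>. \<epsilon> > 0 \<Longrightarrow> \<exists>N. \<forall>n n'. N \<le> n \<longrightarrow> N \<le> n' \<longrightarrow> c0_metric (\<sigma> n) (\<sigma> n') < \<epsilon>"
    using assms unfolding c0.MCauchy_def by blast+
  fix e :: real assume "e > 0"
  then obtain N where N: "\<forall>n n'. N \<le> n \<longrightarrow> N \<le> n' \<longrightarrow> c0_metric (\<sigma> n) (\<sigma> n') < e"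
    using cauchy by blast
  have "abs_dist v (\<sigma> n a) (\<sigma> n' a) < e" if "N \<le> n" "N \<le> n'" for n n'
    using abs_le_c0_metric[OF \<sigma>[of n] \<sigma>[of n'], of a] N that unfolding abs_dist_def by fastforce
  then show "\<exists>N. \<forall>n n'. N \<le> n \<longrightarrow> N \<le> n' \<longrightarrow> abs_dist v (\<sigma> n a) (\<sigma> n' a) < e"
    by blast
qed simp

lemma c0_MCauchy_uniform_limit:
  assumes "c0.MCauchy \<sigma>" and z: "\<And>a. limitin field.mtopology (\<lambda>n. \<sigma> n a) (z a) sequentially"
    and "e > 0"
  shows "\<exists>N. \<forall>n\<ge>N. \<forall>a. v (\<sigma> n a - z a) < e"
proof -
  have \<sigma>: "\<And>n. \<sigma> n \<in> c0 v A"
    and cauchy: "\<And>\<epsilon>. \<epsilon> > 0 \<Longrightarrow> \<exists>N. \<forall>n n'. N \<le> n \<longrightarrow> N \<le> n' \<longrightarrow> c0_metric (\<sigma> n) (\<sigma> n') < \<epsilon>"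
    using assms(1) unfolding c0.MCauchy_def by blast+
  obtain N where N: "\<forall>n n'. N \<le> n \<longrightarrow> N \<le> n' \<longrightarrow> c0_metric (\<sigma> n) (\<sigma> n') < e / 2"
    using cauchy[of "e / 2"] \<open>e > 0\<close> by auto
  \<comment> \<open>the \<open>a\<close>-th coordinates from \<open>N\<close> on lie in a closed ball, hence so does their limit\<close>
  have ball: "z a \<in> field.mcball (\<sigma> n a) (e / 2)" if "N \<le> n" for n a
  proof (rule limitin_closedin[OF z field.closedin_mcball])
    have "v (\<sigma> n a - \<sigma> m a) \<le> e / 2" if "N \<le> m" for m
      using N \<open>N \<le> n\<close> that abs_le_c0_metric[OF \<sigma>[of n] \<sigma>[of m], of a] by fastforce
    then show "eventually (\<lambda>m. \<sigma> m a \<in> field.mcball (\<sigma> n a) (e / 2)) sequentially"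
      unfolding eventually_sequentially by (auto simp: abs_dist_def)
  qed simp
  have "v (\<sigma> n a - z a) < e" if "N \<le> n" for n a
    using ball[OF that, of a] \<open>e > 0\<close> by (simp add: abs_dist_def)
  then show ?thesis
    by blast
qed

lemma limitin_c0_uniform:
  assumes \<sigma>: "\<And>n. \<sigma> n \<in> c0 v A" and z: "z \<in> c0 v A"
    and unif: "\<And>e. e > 0 \<Longrightarrow> \<exists>N. \<forall>n\<ge>N. \<forall>a. v (\<sigma> n a - z a) < e"
  shows "limitin c0.mtopology \<sigma> z sequentially"
  unfolding c0.limitin_metric
proof (intro conjI allI impI z)
  fix e :: real assume "e > 0"
  then obtain N where N: "\<forall>n\<ge>N. \<forall>a. v (\<sigma> n a - z a) < e / 2"
    using unif[of "e / 2"] by auto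
  have "c0_metric (\<sigma> n) z < e" if "N \<le> n" for n
  proof -
    have "v (\<sigma> n a - z a) \<le> e / 2" for a
      using N that less_imp_le by blast
    then have "c0dist v (\<sigma> n) z \<le> e / 2"
      using c0dist_le_iff[OF \<sigma>[of n] z] by blast
    then show ?thesis
      using \<sigma> z \<open>e > 0\<close> unfolding c0_metric_def by simp
  qed
  then show "eventually (\<lambda>n. \<sigma> n \<in> c0 v A \<and> c0_metric (\<sigma> n) z < e) sequentially"
    using \<sigma> unfolding eventually_sequentially by blast
qed

lemma mcomplete_c0:
  assumes "locally_compact_abs v"
  shows "c0.mcomplete"
  unfolding c0.mcomplete_def
proof (intro allI impI)
  fix \<sigma> assume cauchy: "c0.MCauchy \<sigma>"
  then have \<sigma>: "\<And>n. \<sigma> n \<in> c0 v A"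
    unfolding c0.MCauchy_def by blast
  have "\<forall>a. \<exists>x. limitin field.mtopology (\<lambda>n. \<sigma> n a) x sequentially"
    using mcomplete_abs_dist[OF assms] MCauchy_c0_coordinate[OF cauchy] unfolding field.mcomplete_def by blast
  then obtain z where "\<And>a. limitin field.mtopology (\<lambda>n. \<sigma> n a) (z a) sequentially"
    by metis
  note unif = c0_MCauchy_uniform_limit[OF cauchy this]
  have "z \<in> c0 v A"
    using \<sigma> unif by (rule c0_uniform_limit_mem)
  then show "\<exists>x. limitin c0.mtopology \<sigma> x sequentially"
    using limitin_c0_uniform[OF \<sigma> _ unif] by blast
qed

lemma c0_restrict:
  assumes "x \<in> c0 v A" "\<And>a. a \<notin> A' \<Longrightarrow> x a = 0"
  shows "x \<in> c0 v A'"
  using assms unfolding c0_def by blast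

lemma c0_simplex_point_in_balls:
  assumes "A' \<subseteq> A" "c \<in> c0 v A" and y: "y \<in> c0 v A'" "c0norm v y \<le> 1"
  shows "(\<lambda>a. c a + q * y a) \<in> {z \<in> c0 v A. \<forall>a. z a \<in> field.mcball (c a) (if a \<in> A' then v q else 0)}"
proof -
  have "y \<in> c0 v A"
    using c0_mono[OF assms(1)] y(1) by blast
  then have "(\<lambda>a. c a + q * y a) \<in> c0 v A"
    by (intro c0_add assms(2) c0_scale)
  moreover have "v (q * y a) \<le> (if a \<in> A' then v q else 0)" for a
  proof -
    have "v (y a) \<le> 1"
      using abs_le_c0norm[OF y(1)] y(2) by (rule order.trans)
    moreover have "y a = 0" if "a \<notin> A'"
      using y(1) that unfolding c0_def by blast
    ultimately show ?thesis
      using abs_nonneg[of q] by (simp add: abs_mult mult_left_le)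
  qed
  ultimately show ?thesis
    by (simp add: abs_dist_def)
qed

lemma balls_point_in_c0_simplex:
  assumes "q \<noteq> 0" "c \<in> c0 v A" "z \<in> c0 v A"
    and ball: "\<And>a. v (c a - z a) \<le> (if a \<in> A' then v q else 0)"
  shows "\<exists>y. z = (\<lambda>a. c a + q * y a) \<and> y \<in> c0 v A' \<and> c0norm v y \<le> 1"
proof (intro exI conjI)
  define y where "y a = inverse q * (z a - c a)" for a
  show "z = (\<lambda>a. c a + q * y a)"
    using assms(1) by (simp add: y_def mult.assoc[symmetric])
  show "y \<in> c0 v A'"
  proof (rule c0_restrict)
    show "y \<in> c0 v A"
      unfolding y_def by (intro c0_scale c0_diff assms(2,3))
    show "y a = 0" if "a \<notin> A'" for a
      using ball[of a] that by (simp add: y_def)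
  qed
  show "c0norm v y \<le> 1"
  proof (rule c0norm_le)
    fix a
    have "v (z a - c a) \<le> v q"
      using ball[of a] abs_nonneg[of q] by (simp add: abs_diff_commute split: if_splits)
    moreover have "v (y a) = v (z a - c a) / v q"
      by (simp add: y_def abs_mult abs_inverse divide_inverse_commute)
    ultimately show "v (y a) \<le> 1"
      using assms(1) by (simp add: divide_le_eq_1)
  qed
qed

lemma c0_simplex_eq_balls:
  assumes "q \<noteq> 0" "A' \<subseteq> A" "c \<in> c0 v A"
  shows "{(\<lambda>a. c a + q * y a) | y. y \<in> c0 v A' \<and> c0norm v y \<le> 1}
    = {z \<in> c0 v A. \<forall>a. z a \<in> field.mcball (c a) (if a \<in> A' then v q else 0)}"
proof (intro equalityI subsetI)
  fix z assume "z \<in> {(\<lambda>a. c a + q * y a) | y. y \<in> c0 v A' \<and> c0norm v y \<le> 1}"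
  then obtain y where "z = (\<lambda>a. c a + q * y a)" "y \<in> c0 v A'" "c0norm v y \<le> 1"
    by blast
  then show "z \<in> {z \<in> c0 v A. \<forall>a. z a \<in> field.mcball (c a) (if a \<in> A' then v q else 0)}"
    using c0_simplex_point_in_balls[OF assms(2,3)] by simp
next
  fix z assume "z \<in> {z \<in> c0 v A. \<forall>a. z a \<in> field.mcball (c a) (if a \<in> A' then v q else 0)}"
  then have "z \<in> c0 v A" "\<And>a. v (c a - z a) \<le> (if a \<in> A' then v q else 0)"
    by (auto simp: abs_dist_def)
  then obtain y where "z = (\<lambda>a. c a + q * y a)" "y \<in> c0 v A'" "c0norm v y \<le> 1"
    using balls_point_in_c0_simplex[OF assms(1,3)] by blast
  then show "z \<in> {(\<lambda>a. c a + q * y a) | y. y \<in> c0 v A' \<and> c0norm v y \<le> 1}"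
    by blast
qed

lemma closedin_c0_simplex:
  assumes "c0_simplex v p A s" "p \<noteq> 0"
  shows "closedin c0.mtopology s"
proof -
  obtain c A' k where "A' \<subseteq> A" "c \<in> c0 v A"
    and s: "s = {(\<lambda>a. c a + p powi k * y a) | y. y \<in> c0 v A' \<and> c0norm v y \<le> 1}"
    using assms(1) unfolding c0_simplex_def by blast
  moreover have "p powi k \<noteq> 0"
    using assms(2) by simp
  ultimately show ?thesis
    using closedin_c0_coordinatewise[OF field.closedin_mcball] c0_simplex_eq_balls by simp
qed

lemma mcomplete_uniform_polyhedron:
  assumes "locally_compact_abs v" "p \<noteq> 0" "uniform_polyhedron v p A P"
  shows "Metric_space.mcomplete P c0_metric"
proof -
  obtain S where P: "P \<subseteq> c0 v A" "\<Union>S = P" and simplices: "\<forall>s\<in>S. c0_simplex v p A s"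
    and "\<exists>\<delta>>0. \<forall>s\<in>S. \<forall>t\<in>S. s \<noteq> t \<longrightarrow> (\<forall>x\<in>s. \<forall>y\<in>t. \<delta> \<le> c0dist v x y)"
    using assms(3) unfolding uniform_polyhedron_def by auto
  then obtain \<delta> where "\<delta> > 0"
    and sep: "\<forall>s\<in>S. \<forall>t\<in>S. s \<noteq> t \<longrightarrow> (\<forall>x\<in>s. \<forall>y\<in>t. \<delta> \<le> c0dist v x y)"
    by auto
  interpret Submetric "c0 v A" c0_metric P
    using P(1) by unfold_locales
  have "closedin c0.mtopology (\<Union>S)"
  proof (rule c0.closedin_Union_separated[OF _ \<open>\<delta> > 0\<close>])
    show "closedin c0.mtopology s" if "s \<in> S" for s
      using closedin_c0_simplex[OF _ assms(2)] simplices that by blast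
    fix s t x y assume st: "s \<in> S" "t \<in> S" "s \<noteq> t" and xy: "x \<in> s" "y \<in> t"
    then have "c0_metric x y = c0dist v x y"
      using P unfolding c0_metric_def by auto
    then show "\<delta> \<le> c0_metric x y"
      using sep st xy by simp
  qed
  then show ?thesis
    using closedin_mcomplete_imp_mcomplete mcomplete_c0[OF assms(1)] P(2) by simp
qed

end

lemma generated_uniformity_singleton:
  "generated_uniformity X {d} = {D. D \<subseteq> X \<times> X \<and> (\<exists>\<eta>>0. \<forall>x\<in>X. \<forall>y\<in>X. d x y < \<eta> \<longrightarrow> (x, y) \<in> D)}"
  unfolding generated_uniformity_def
proof (intro Collect_cong conj_cong refl iffI)
  fix D
  assume "\<exists>F e. finite F \<and> F \<subseteq> {d} \<and> 0 < e \<and> {(x, y). x \<in> X \<and> y \<in> X \<and> (\<forall>d\<in>F. d x y < e)} \<subseteq> D"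
  then obtain F e where "F \<subseteq> {d}" "0 < e" "{(x, y). x \<in> X \<and> y \<in> X \<and> (\<forall>d\<in>F. d x y < e)} \<subseteq> D"
    by blast
  then show "\<exists>\<eta>>0. \<forall>x\<in>X. \<forall>y\<in>X. d x y < \<eta> \<longrightarrow> (x, y) \<in> D"
    by blast
next
  fix D
  assume "\<exists>\<eta>>0. \<forall>x\<in>X. \<forall>y\<in>X. d x y < \<eta> \<longrightarrow> (x, y) \<in> D"
  then obtain \<eta> where "\<eta> > 0" "\<forall>x\<in>X. \<forall>y\<in>X. d x y < \<eta> \<longrightarrow> (x, y) \<in> D"
    by blast
  then show "\<exists>F e. finite F \<and> F \<subseteq> {d} \<and> 0 < e \<and> {(x, y). x \<in> X \<and> y \<in> X \<and> (\<forall>d\<in>F. d x y < e)} \<subseteq> D"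
    by (intro exI[of _ "{d}"] exI[of _ \<eta>]) auto
qed

lemma generated_uniformity_cong:
  assumes "\<And>x y. x \<in> X \<Longrightarrow> y \<in> X \<Longrightarrow> d x y = d' x y"
  shows "generated_uniformity X {d} = generated_uniformity X {d'}"
  unfolding generated_uniformity_singleton using assms by simp

lemma unif_cont_map_from_generated:
  assumes "unif_cont_map X (generated_uniformity X {d}) Y W f" "F \<in> W"
  shows "\<exists>\<eta>>0. \<forall>x\<in>X. \<forall>x'\<in>X. d x x' < \<eta> \<longrightarrow> (f x, f x') \<in> F"
proof -
  obtain D where "D \<in> generated_uniformity X {d}" and D: "\<And>x x'. (x, x') \<in> D \<Longrightarrow> (f x, f x') \<in> F"
    using assms unfolding unif_cont_map_def by blast
  then obtain \<eta> where "\<eta> > 0" "\<forall>x\<in>X. \<forall>x'\<in>X. d x x' < \<eta> \<longrightarrow> (x, x') \<in> D"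
    unfolding generated_uniformity_singleton by blast
  with D show ?thesis
    by blast
qed

lemma uniform_embedding_inverse_small:
  assumes "uniform_embedding X (generated_uniformity X {d}) Y W e" "\<epsilon> > 0"
  shows "\<exists>F\<in>W. \<forall>x\<in>X. \<forall>x'\<in>X. (e x, e x') \<in> F \<longrightarrow> d x x' < \<epsilon>"
proof -
  obtain g where g: "unif_cont_map (e ` X) (subspace_uniformity W (e ` X)) X (generated_uniformity X {d}) g"
    and ge: "\<And>x. x \<in> X \<Longrightarrow> g (e x) = x"
    using assms(1) unfolding uniform_embedding_def by blast
  have "{(x, x'). x \<in> X \<and> x' \<in> X \<and> d x x' < \<epsilon>} \<in> generated_uniformity X {d}"
    unfolding generated_uniformity_singleton using assms(2) by blast
  then obtain D where "D \<in> subspace_uniformity W (e ` X)"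
    and D: "\<And>u u'. (u, u') \<in> D \<Longrightarrow> d (g u) (g u') < \<epsilon>"
    using g unfolding unif_cont_map_def by fast
  then obtain F where "F \<in> W" "D = F \<inter> (e ` X \<times> e ` X)"
    unfolding subspace_uniformity_def by blast
  with D ge show ?thesis
    by (metis (no_types, lifting) IntI mem_Sigma_iff image_eqI)
qed

lemma ultrauniform_space_generated:
  "pseudoultrametric X d \<Longrightarrow> ultrauniform_space X (generated_uniformity X {d})"
  unfolding ultrauniform_space_def by blast

lemma ultrauniform_Int:
  assumes "ultrauniform_space Y W" "E1 \<in> W" "E2 \<in> W"
  shows "E1 \<inter> E2 \<in> W"
proof -
  obtain D where W: "W = generated_uniformity Y D"
    using assms(1) unfolding ultrauniform_space_def by blast
  obtain F1 e1 where F1: "finite F1" "F1 \<subseteq> D" "0 < e1" "E1 \<subseteq> Y \<times> Y"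
    "{(x, y). x \<in> Y \<and> y \<in> Y \<and> (\<forall>d\<in>F1. d x y < e1)} \<subseteq> E1"
    using assms(2) unfolding W generated_uniformity_def by blast
  obtain F2 e2 where F2: "finite F2" "F2 \<subseteq> D" "0 < e2"
    "{(x, y). x \<in> Y \<and> y \<in> Y \<and> (\<forall>d\<in>F2. d x y < e2)} \<subseteq> E2"
    using assms(3) unfolding W generated_uniformity_def by blast
  have "{(x, y). x \<in> Y \<and> y \<in> Y \<and> (\<forall>d\<in>F1 \<union> F2. d x y < min e1 e2)} \<subseteq> E1 \<inter> E2"
    using F1(5) F2(4) by auto
  with F1 F2 show ?thesis
    unfolding W generated_uniformity_def
    by (intro CollectI conjI exI[of _ "F1 \<union> F2"] exI[of _ "min e1 e2"]) auto
qed

lemma ultrauniform_equiv_entourage: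
  assumes "ultrauniform_space Y W" "E \<in> W"
  obtains B where "B \<in> W" "B \<subseteq> E" "equiv Y B"
proof -
  obtain D where D: "\<And>d. d \<in> D \<Longrightarrow> pseudoultrametric Y d" and W: "W = generated_uniformity Y D"
    using assms(1) unfolding ultrauniform_space_def by blast
  obtain F e where F: "finite F" "F \<subseteq> D" "0 < e"
    and sub: "{(x, y). x \<in> Y \<and> y \<in> Y \<and> (\<forall>d\<in>F. d x y < e)} \<subseteq> E"
    using assms(2) unfolding W generated_uniformity_def by blast
  define B where "B = {(x, y). x \<in> Y \<and> y \<in> Y \<and> (\<forall>d\<in>F. d x y < e)}"
  have pu: "\<And>d. d \<in> F \<Longrightarrow> pseudoultrametric Y d"
    using F(2) D by blast
  have "B \<in> W"
    unfolding W generated_uniformity_def B_def using F by blast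
  moreover have "equiv Y B"
  proof (rule equivI)
    have "d x x < e" if "d \<in> F" "x \<in> Y" for d x
      using pu[OF that(1)] that(2) F(3) unfolding pseudoultrametric_def by simp
    then show "refl_on Y B"
      unfolding refl_on_def B_def by blast
    show "sym B"
      using pu unfolding sym_def B_def pseudoultrametric_def by auto
    show "trans B"
    proof (rule transI)
      fix x y z assume "(x, y) \<in> B" "(y, z) \<in> B"
      moreover have "d x z \<le> max (d x y) (d y z)" if "d \<in> F" "x \<in> Y" "y \<in> Y" "z \<in> Y" for d
        using pu[OF that(1)] that(2-4) unfolding pseudoultrametric_def by blast
      ultimately show "(x, z) \<in> B"
        unfolding B_def by (fastforce simp: max_less_iff_conj)
    qed
  qed (auto simp: B_def)
  ultimately show ?thesis
    using that sub B_def by blast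
qed

lemma ultrauniform_decseq_equiv_entourages:
  assumes "ultrauniform_space Y W" "\<And>n. F n \<in> W"
  shows "\<exists>E. decseq E \<and> (\<forall>n. E n \<in> W \<and> equiv Y (E n) \<and> E n \<subseteq> F n)"
proof -
  let ?P = "\<lambda>n B. B \<in> W \<and> equiv Y B \<and> B \<subseteq> F n"
  have "\<exists>E. \<forall>n. ?P n (E n) \<and> E (Suc n) \<subseteq> E n"
  proof (rule dependent_nat_choice)
    show "\<exists>B. ?P 0 B"
      using ultrauniform_equiv_entourage[OF assms] by metis
    fix B n assume "?P n B"
    then have "B \<inter> F (Suc n) \<in> W"
      using ultrauniform_Int[OF assms(1)] assms(2) by blast
    then show "\<exists>B'. ?P (Suc n) B' \<and> B' \<subseteq> B"
      using ultrauniform_equiv_entourage[OF assms(1)] by (metis le_inf_iff)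
  qed
  then show ?thesis
    using decseq_SucI by metis
qed

lemma uniform_embedding_equiv_chain:
  assumes Y: "ultrauniform_space Y W" and emb: "uniform_embedding X (generated_uniformity X {d}) Y W e"
  shows "\<exists>E. decseq E \<and> (\<forall>n. E n \<in> W \<and> equiv Y (E n) \<and>
      (\<forall>x\<in>X. \<forall>x'\<in>X. (e x, e x') \<in> E n \<longrightarrow> d x x' < inverse (Suc n)))"
proof -
  have "\<forall>n. \<exists>F. F \<in> W \<and> (\<forall>x\<in>X. \<forall>x'\<in>X. (e x, e x') \<in> F \<longrightarrow> d x x' < inverse (Suc n))"
  proof
    fix n
    show "\<exists>F. F \<in> W \<and> (\<forall>x\<in>X. \<forall>x'\<in>X. (e x, e x') \<in> F \<longrightarrow> d x x' < inverse (Suc n))"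
      using uniform_embedding_inverse_small[OF emb, of "inverse (Suc n)"] by auto
  qed
  then have "\<exists>F. \<forall>n. F n \<in> W \<and> (\<forall>x\<in>X. \<forall>x'\<in>X. (e x, e x') \<in> F n \<longrightarrow> d x x' < inverse (Suc n))"
    by (rule choice)
  then obtain F where F: "\<forall>n. F n \<in> W \<and> (\<forall>x\<in>X. \<forall>x'\<in>X. (e x, e x') \<in> F n \<longrightarrow> d x x' < inverse (Suc n))"
    by blast
  then have "\<exists>E. decseq E \<and> (\<forall>n. E n \<in> W \<and> equiv Y (E n) \<and> E n \<subseteq> F n)"
    using ultrauniform_decseq_equiv_entourages[OF Y] by blast
  with F show ?thesis
    by blast
qed

locale equiv_chain_retraction = Metric_space X d
  for X :: "'a set" and d +
  fixes Y :: "'b set" and W :: "('b \<times> 'b) set set" and e :: "'a \<Rightarrow> 'b"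
    and E :: "nat \<Rightarrow> ('b \<times> 'b) set"
  assumes complete: "mcomplete"
    and e_into: "e ` X \<subseteq> Y"
    and e_uniform: "\<And>F. F \<in> W \<Longrightarrow> \<exists>\<eta>>0. \<forall>x\<in>X. \<forall>x'\<in>X. d x x' < \<eta> \<longrightarrow> (e x, e x') \<in> F"
    and E_entourage: "\<And>n. E n \<in> W"
    and E_equiv: "\<And>n. equiv Y (E n)"
    and E_decseq: "decseq E"
    and E_small: "\<And>n x x'. x \<in> X \<Longrightarrow> x' \<in> X \<Longrightarrow> (e x, e x') \<in> E n \<Longrightarrow> d x x' < inverse (Suc n)"
begin

lemma E_refl: "y \<in> Y \<Longrightarrow> (y, y) \<in> E n"
  using E_equiv[of n] unfolding equiv_def refl_on_def by blast

lemma E_sym: "(y, y') \<in> E n \<Longrightarrow> (y', y) \<in> E n"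
  using E_equiv[of n] unfolding equiv_def by (blast dest: symD)

lemma E_trans: "(y, y') \<in> E n \<Longrightarrow> (y', y'') \<in> E n \<Longrightarrow> (y, y'') \<in> E n"
  using E_equiv[of n] unfolding equiv_def by (blast dest: transD)

lemma E_subset: "E n \<subseteq> Y \<times> Y"
  using E_equiv[of n] unfolding equiv_def by blast

lemma E_antimono: "m \<le> n \<Longrightarrow> E n \<subseteq> E m"
  using E_decseq by (rule decseqD)

lemma E_separates:
  assumes "x \<in> X" "x' \<in> X" "\<And>n. (e x, e x') \<in> E n"
  shows "x = x'"
proof (rule ccontr)
  assume "x \<noteq> x'"
  then have "d x x' > 0"
    using assms(1,2) by (simp add: order_less_le)
  then obtain n where "inverse (Suc n) < d x x'"
    using reals_Archimedean by blast
  then show False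
    using E_small[OF assms(1,2,3)] by (meson order.asym)
qed

definition near :: "'b \<Rightarrow> nat \<Rightarrow> bool" where
  "near y n \<longleftrightarrow> (\<exists>x\<in>X. (e x, y) \<in> E n)"

text \<open>\<open>depth y\<close> is the first level at which \<open>y\<close> is not near \<open>e ` X\<close>; for \<open>y\<close> near \<open>e ` X\<close> at
  level \<open>0\<close> it is positive, so \<open>depth y - 1\<close> is the last level at which \<open>y\<close> is near. The choice
  of a point of the \<open>E (depth y - 1)\<close>-class of \<open>y\<close> depends on that class only.\<close>

definition depth :: "'b \<Rightarrow> nat" where
  "depth y = (LEAST n. \<not> near y n)"

definition retraction :: "'b \<Rightarrow> 'b" where
  "retraction y = e (if \<forall>n. near y n then SOME x. x \<in> X \<and> (\<forall>n. (e x, y) \<in> E n)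
                     else SOME x. x \<in> X \<and> (e x, y) \<in> E (depth y - 1))"

lemma near_antimono: "near y n \<Longrightarrow> m \<le> n \<Longrightarrow> near y m"
  unfolding near_def using E_antimono by blast

lemma near_iff:
  assumes "(y, y') \<in> E n" "m \<le> n"
  shows "near y m \<longleftrightarrow> near y' m"
proof -
  have yy': "(y, y') \<in> E m"
    using assms E_antimono by blast
  show ?thesis
    unfolding near_def using E_trans[OF _ yy'] E_trans[OF _ E_sym[OF yy']] by blast
qed

lemma MCauchy_E_approximations:
  assumes xs: "\<And>n. xs n \<in> X" "\<And>n. (e (xs n), y) \<in> E n"
  shows "MCauchy xs"
  unfolding MCauchy_def
proof (intro conjI allI impI)
  show "range xs \<subseteq> X"
    using xs(1) by blast
  have close: "(e (xs n), e (xs n')) \<in> E m" if "m \<le> n" "m \<le> n'" for m n n'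
  proof -
    have "(e (xs n), y) \<in> E m" "(e (xs n'), y) \<in> E m"
      using xs(2) E_antimono[OF that(1)] E_antimono[OF that(2)] by blast+
    then show ?thesis
      using E_trans E_sym by blast
  qed
  fix \<epsilon> :: real assume "\<epsilon> > 0"
  then obtain N where "inverse (Suc N) < \<epsilon>"
    using reals_Archimedean by blast
  then show "\<exists>N. \<forall>n n'. N \<le> n \<longrightarrow> N \<le> n' \<longrightarrow> d (xs n) (xs n') < \<epsilon>"
    using E_small[OF xs(1) xs(1) close] by (meson order.strict_trans)
qed

lemma limit_E_approximations:
  assumes lim: "limitin mtopology xs z sequentially"
    and xs: "\<And>n. xs n \<in> X" "\<And>n. (e (xs n), y) \<in> E n"
  shows "(e z, y) \<in> E n"
proof -
  have z: "z \<in> X"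
    using lim by (rule limitin_mspace)
  obtain \<eta> where "\<eta> > 0" and \<eta>: "\<forall>x\<in>X. \<forall>x'\<in>X. d x x' < \<eta> \<longrightarrow> (e x, e x') \<in> E n"
    using e_uniform[OF E_entourage] by blast
  then have "eventually (\<lambda>m. xs m \<in> X \<and> d (xs m) z < \<eta>) sequentially"
    using lim unfolding limitin_metric by blast
  then obtain N where "\<forall>m\<ge>N. xs m \<in> X \<and> d (xs m) z < \<eta>"
    unfolding eventually_sequentially by blast
  then have "(e (xs (max N n)), e z) \<in> E n"
    using \<eta> z xs(1) by simp
  moreover have "(e (xs (max N n)), y) \<in> E n"
    using xs(2) E_antimono[of n "max N n"] by auto
  ultimately show ?thesis
    using E_trans E_sym by blast
qed

lemma near_limit:
  assumes "\<forall>n. near y n"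
  shows "\<exists>x\<in>X. \<forall>n. (e x, y) \<in> E n"
proof -
  obtain xs where xs: "\<And>n. xs n \<in> X" "\<And>n. (e (xs n), y) \<in> E n"
    using assms unfolding near_def by metis
  then obtain z where lim: "limitin mtopology xs z sequentially"
    using MCauchy_E_approximations complete unfolding mcomplete_def by blast
  then show ?thesis
    using limitin_mspace limit_E_approximations[OF lim xs] by blast
qed

lemma retraction_close:
  assumes "near y 0"
  shows "retraction y \<in> e ` X \<and> (\<forall>n. near y n \<longrightarrow> (retraction y, y) \<in> E n)"
proof (cases "\<forall>n. near y n")
  case True
  then have "\<exists>x. x \<in> X \<and> (\<forall>n. (e x, y) \<in> E n)"
    using near_limit by blast
  from someI_ex[OF this] True show ?thesis
    unfolding retraction_def by auto
next
  case False
  then have not_near: "\<not> near y (depth y)"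
    unfolding depth_def using LeastI_ex[of "\<lambda>n. \<not> near y n"] by blast
  then have "depth y \<noteq> 0"
    using assms by metis
  then have "depth y - 1 < depth y"
    by simp
  then have "near y (depth y - 1)"
    unfolding depth_def using not_less_Least by blast
  then have "\<exists>x. x \<in> X \<and> (e x, y) \<in> E (depth y - 1)"
    unfolding near_def by blast
  note chosen = someI_ex[OF this]
  have "(e (SOME x. x \<in> X \<and> (e x, y) \<in> E (depth y - 1)), y) \<in> E n" if "near y n" for n
  proof -
    have "n \<le> depth y - 1"
      using near_antimono[OF that, of "depth y"] not_near by linarith
    then show ?thesis
      using chosen E_antimono by blast
  qed
  then show ?thesis
    using chosen False unfolding retraction_def by auto
qed

lemma retraction_fixes:
  assumes "x \<in> X"
  shows "retraction (e x) = e x"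
proof -
  have "e x \<in> Y"
    using assms e_into by blast
  then have near: "near (e x) n" for n
    unfolding near_def using assms E_refl by blast
  then have "retraction (e x) \<in> e ` X" and rel: "\<And>n. (retraction (e x), e x) \<in> E n"
    using retraction_close[OF near] by blast+
  then obtain x' where "x' \<in> X" and x': "retraction (e x) = e x'"
    by blast
  then have "x' = x"
    using E_separates[OF \<open>x' \<in> X\<close> assms] rel by simp
  then show ?thesis
    using x' by simp
qed

lemma depth_eq:
  assumes "(y, y') \<in> E n" "\<not> near y n"
  shows "depth y' = depth y"
  unfolding depth_def[of y']
proof (rule Least_equality)
  have "depth y \<le> n"
    unfolding depth_def using assms(2) by (rule Least_le)
  moreover have "\<not> near y (depth y)"
    unfolding depth_def using assms(2) by (rule LeastI)
  ultimately show "\<not> near y' (depth y)"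
    using near_iff[OF assms(1)] by blast
  fix m assume "\<not> near y' m"
  show "depth y \<le> m"
  proof (cases "m \<le> n")
    case True
    then have "\<not> near y m"
      using near_iff[OF assms(1)] \<open>\<not> near y' m\<close> by blast
    then show ?thesis
      unfolding depth_def by (rule Least_le)
  next
    case False
    then show ?thesis
      using \<open>depth y \<le> n\<close> by simp
  qed
qed

lemma retraction_respects_E:
  assumes "near y 0" "near y' 0" "(y, y') \<in> E n"
  shows "(retraction y, retraction y') \<in> E n"
proof (cases "near y n")
  case True
  then have "(retraction y, y) \<in> E n" "(retraction y', y') \<in> E n"
    using retraction_close assms near_iff[OF assms(3) order.refl] by blast+
  then show ?thesis
    using E_trans[OF E_trans[OF _ assms(3)] E_sym] by blast
next
  case False
  then have "\<not> near y' n"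
    using near_iff[OF assms(3) order.refl] by blast
  have depth: "depth y' = depth y"
    using depth_eq[OF assms(3) False] .
  have "depth y \<le> n"
    unfolding depth_def using False by (rule Least_le)
  then have "E n \<subseteq> E (depth y - 1)"
    by (intro E_antimono) simp
  then have yy': "(y, y') \<in> E (depth y - 1)"
    using assms(3) by blast
  \<comment> \<open>\<open>y\<close> and \<open>y'\<close> share their class at the last level where they are near, so the same point is chosen\<close>
  have "(\<lambda>x. x \<in> X \<and> (e x, y) \<in> E (depth y - 1)) = (\<lambda>x. x \<in> X \<and> (e x, y') \<in> E (depth y - 1))"
    using E_trans[OF _ yy'] E_trans[OF _ E_sym[OF yy']] by blast
  then have "retraction y = retraction y'"
    using False \<open>\<not> near y' n\<close> unfolding retraction_def depth by auto
  moreover have "retraction y \<in> Y"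
    using retraction_close[OF assms(1)] e_into by blast
  ultimately show ?thesis
    using E_refl by simp
qed

lemma uniform_nbhd_near: "uniform_nbhd Y W (e ` X) {y. near y 0}"
  unfolding uniform_nbhd_def
proof (intro conjI bexI[of _ "E 0"])
  show "e ` X \<subseteq> {y. near y 0}"
    unfolding near_def using e_into E_refl by blast
  show "{y. near y 0} \<subseteq> Y"
    unfolding near_def using E_subset by blast
  show "{y. \<exists>x\<in>e ` X. (x, y) \<in> E 0} \<subseteq> {y. near y 0}"
    unfolding near_def by blast
qed (rule E_entourage)

lemma unif_cont_retraction:
  "unif_cont_map {y. near y 0} (subspace_uniformity W {y. near y 0}) (e ` X) (subspace_uniformity W (e ` X)) retraction"
  unfolding unif_cont_map_def
proof (intro conjI ballI)
  show "retraction ` {y. near y 0} \<subseteq> e ` X"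
    using retraction_close by blast
  fix G assume "G \<in> subspace_uniformity W (e ` X)"
  then obtain F where "F \<in> W" and G: "G = F \<inter> (e ` X \<times> e ` X)"
    unfolding subspace_uniformity_def by blast
  then obtain \<eta> where "\<eta> > 0" and \<eta>: "\<forall>x\<in>X. \<forall>x'\<in>X. d x x' < \<eta> \<longrightarrow> (e x, e x') \<in> F"
    using e_uniform by blast
  then obtain n where n: "inverse (Suc n) < \<eta>"
    using reals_Archimedean by blast
  have "(retraction y, retraction y') \<in> G" if "(y, y') \<in> E n \<inter> ({y. near y 0} \<times> {y. near y 0})" for y y'
  proof -
    have "retraction y \<in> e ` X" "retraction y' \<in> e ` X"
      using retraction_close that by blast+
    then obtain x x' where x: "x \<in> X" "retraction y = e x" and x': "x' \<in> X" "retraction y' = e x'"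
      by blast
    have "(retraction y, retraction y') \<in> E n"
      using retraction_respects_E that by blast
    then have "d x x' < \<eta>"
      using E_small[OF x(1) x'(1), of n] n x x' by simp
    then have "(e x, e x') \<in> F"
      using \<eta> x(1) x'(1) by blast
    then show ?thesis
      unfolding G using x x' by auto
  qed
  moreover have "E n \<inter> ({y. near y 0} \<times> {y. near y 0}) \<in> subspace_uniformity W {y. near y 0}"
    unfolding subspace_uniformity_def using E_entourage by blast
  ultimately show "\<exists>D\<in>subspace_uniformity W {y. near y 0}. \<forall>y y'. (y, y') \<in> D \<longrightarrow> (retraction y, retraction y') \<in> G"
    by blast
qed

end

theorem ANRU_complete_ultrametric:
  assumes "Metric_space X d" "Metric_space.mcomplete X d"
    and ultra: "\<And>x y z. x \<in> X \<Longrightarrow> y \<in> X \<Longrightarrow> z \<in> X \<Longrightarrow> d x z \<le> max (d x y) (d y z)"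
  shows "ANRU X (generated_uniformity X {d}) TYPE('b)"
  unfolding ANRU_def
proof (intro conjI allI impI)
  interpret Metric_space X d
    by (rule assms(1))
  show "ultrauniform_space X (generated_uniformity X {d})"
    using ultra commute by (intro ultrauniform_space_generated) (simp add: pseudoultrametric_def)
  fix Y :: "'b set" and W e
  assume "ultrauniform_space Y W \<and> uniform_embedding X (generated_uniformity X {d}) Y W e"
  then have Y: "ultrauniform_space Y W" and emb: "uniform_embedding X (generated_uniformity X {d}) Y W e"
    by auto
  then have e: "unif_cont_map X (generated_uniformity X {d}) Y W e"
    unfolding uniform_embedding_def by blast
  obtain E where E: "decseq E" "\<And>n. E n \<in> W" "\<And>n. equiv Y (E n)"
    and small: "\<And>n. \<forall>x\<in>X. \<forall>x'\<in>X. (e x, e x') \<in> E n \<longrightarrow> d x x' < inverse (Suc n)"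
    using uniform_embedding_equiv_chain[OF Y emb] by blast
  have "equiv_chain_retraction X d Y W e E"
  proof (intro equiv_chain_retraction.intro equiv_chain_retraction_axioms.intro)
    show "e ` X \<subseteq> Y"
      using e unfolding unif_cont_map_def by blast
    show "\<exists>\<eta>>0. \<forall>x\<in>X. \<forall>x'\<in>X. d x x' < \<eta> \<longrightarrow> (e x, e x') \<in> G" if "G \<in> W" for G
      using unif_cont_map_from_generated[OF e that] .
    show "d x x' < inverse (Suc n)" if "x \<in> X" "x' \<in> X" "(e x, e x') \<in> E n" for n x x'
      using small that by blast
    show "Metric_space X d" "Metric_space.mcomplete X d"
      by (fact assms(1), fact assms(2))
  qed (fact E)+
  then interpret equiv_chain_retraction X d Y W e E .
  show "\<exists>V r. uniform_nbhd Y W (e ` X) V \<and>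
      unif_cont_map V (subspace_uniformity W V) (e ` X) (subspace_uniformity W (e ` X)) r \<and> (\<forall>y\<in>e ` X. r y = y)"
    using uniform_nbhd_near unif_cont_retraction retraction_fixes by blast
qed

theorem theorem2p11:
  fixes v :: "'k::field \<Rightarrow> real" and p :: 'k and A :: "'a set" and P :: "('a \<Rightarrow> 'k) set"
  assumes "nonarch_abs v" and "nondiscrete_abs v" and "locally_compact_abs v"
    and "v p < 1" and "\<forall>y. v y < 1 \<longrightarrow> v y \<le> v p"
    and "uniform_polyhedron v p A P"
  shows "ANRU P (c0_uniformity v P) TYPE('b)"
proof -
  interpret c0_space v A
    by unfold_locales (fact assms(1))
  have "p \<noteq> 0"
    by (rule uniformizer_nonzero[OF assms(2,5)])
  have P: "P \<subseteq> c0 v A"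
    using assms(6) unfolding uniform_polyhedron_def by (rule conjunct1)
  have "ANRU P (generated_uniformity P {c0_metric}) TYPE('b)"
  proof (rule ANRU_complete_ultrametric)
    show "Metric_space P c0_metric"
      using P by (rule c0.subspace)
    show "Metric_space.mcomplete P c0_metric"
      by (rule mcomplete_uniform_polyhedron[OF assms(3) \<open>p \<noteq> 0\<close> assms(6)])
    show "c0_metric x z \<le> max (c0_metric x y) (c0_metric y z)" if "x \<in> P" "y \<in> P" "z \<in> P" for x y z
      using that P by (intro c0_metric_ultra) auto
  qed
  moreover have "c0_metric x y = c0dist v x y" if "x \<in> P" "y \<in> P" for x y
    using that P unfolding c0_metric_def by auto
  then have "generated_uniformity P {c0_metric} = c0_uniformity v P"
    unfolding c0_uniformity_def by (rule generated_uniformity_cong)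
  ultimately show ?thesis
    by simp
qed

end
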